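(* Let $v_1,\dots,v_m\in\mathbb{C}^d$ with $m$ even, $\sum_{i=1}^m v_iv_i^*=\mathbb{I}$, $\|v_i\|^2=\alpha$ for all $i$, and $\alpha\le \frac{1}{221 d}$ (equivalently $m\ge 221d^2$). Run Algorithm 1 (described in the context) on these vectors, producing matrices $A_0,\dots,A_{m/2}$ and barrier values $u_0,\dots,u_{m/2}$, and set $c_j=u_j-\lambda_{\max}(A_j)$. Then for every $0\le j\le m/2$ we have $c_j\ge 1/3$ and $\kappa(u_j\mathbb{I}-A_j)\le 3/2$.
   Context: Algorithm 1: set $A_0=\mathbf{0}_{d\times d}$, $\mathcal{A}_0=\emptyset$, $\mathcal{B}_0=\{v_1,\dots,v_m\}$, $u_0=1/2$, $\delta_u=\alpha/d$. For $j=0,1,\dots,m/2-1$: set $u_{j+1}=u_j+\delta_u$; choose $v_j\in\mathcal{B}_j$ maximising $\det(u_{j+1}\mathbb{I}-A_j-vv^* )$ over $v\in\mathcal{B}_j$ (ties broken arbitrarily); set $A_{j+1}=A_j+v_jv_j^*$, $\mathcal{A}_{j+1}=\mathcal{A}_j\cup\{v_j\}$, $\mathcal{B}_{j+1}=\mathcal{B}_j\setminus\{v_j\}$. For a Hermitian positive definite matrix $B$, $\kappa(B)=\lambda_{\max}(B)/\lambda_{\min}(B)$ is its condition number. $\mathbb{I}$ is the $d\times d$ identity. *)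

theory Defs
  imports "HOL-Analysis.Analysis"
begin

definition outer :: "complex^'n \<Rightarrow> complex^'n^'n" where
  "outer x = (\<chi> i j. x$i * cnj (x$j))"

definition eigs :: "complex^'n^'n \<Rightarrow> complex set" where
  "eigs A = {c. \<exists>x. x \<noteq> 0 \<and> A *v x = c *s x}"

text \<open>Largest / smallest eigenvalue (meant for Hermitian matrices, whose eigenvalues are real).\<close>
definition lambda_max :: "complex^'n^'n \<Rightarrow> real" where
  "lambda_max A = Max (Re ` eigs A)"

definition lambda_min :: "complex^'n^'n \<Rightarrow> real" where
  "lambda_min A = Min (Re ` eigs A)"

definition cond_num :: "complex^'n^'n \<Rightarrow> real" where
  "cond_num B = lambda_max B / lambda_min B"

text \<open>Algorithm 1. The run is described by the sequence s of chosen indices: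
  at step j the index s j of the vector v_j is picked. A_j and u_j: \<close>
definition alg_A :: "(nat \<Rightarrow> complex^'n) \<Rightarrow> (nat \<Rightarrow> nat) \<Rightarrow> nat \<Rightarrow> complex^'n^'n" where
  "alg_A v s j = (\<Sum>i<j. outer (v (s i)))"

definition alg_u :: "nat \<Rightarrow> real \<Rightarrow> nat \<Rightarrow> real" where
  "alg_u d \<alpha> j = 1/2 + real j * (\<alpha> / real d)"

text \<open>s is a valid run of Algorithm 1 (any tie-breaking) on v_0..v_(m-1).\<close>
definition is_run :: "(nat \<Rightarrow> complex^'n) \<Rightarrow> nat \<Rightarrow> real \<Rightarrow> (nat \<Rightarrow> nat) \<Rightarrow> bool" where
  "is_run v m \<alpha> s \<longleftrightarrow>
     (\<forall>j < m div 2. s j < m \<and> s j \<notin> s ` {..<j} \<and>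
        (\<forall>k < m. k \<notin> s ` {..<j} \<longrightarrow>
           Re (det (mat (complex_of_real (alg_u CARD('n) \<alpha> (Suc j))) - alg_A v s j - outer (v k)))
           \<le> Re (det (mat (complex_of_real (alg_u CARD('n) \<alpha> (Suc j))) - alg_A v s j - outer (v (s j))))))"

end

theory Submission
  imports Defs
begin

(*
  Write A_j = U diag(lambda) U^H and call x_i = u_j - lambda_i the barrier gaps. Since
  sum v_i v_i^H = I and |v_i|^2 = alpha, we have alpha = d/m, the gaps always sum to d/2,
  and in the eigenbasis of A_j the unused vectors have squared coordinates summing to
  1 - lambda_i. By the matrix determinant lemma the average of det(u_(j+1) I - A_j - v v^H)
  over the unused v is therefore an explicit function of the gaps, which elementary
  estimates bound below by (1 - 5.625 alpha^2) prod_i x_i; the greedy choice is at least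
  this average. Inductively 2^d det(u_j I - A_j) >= 1 - 5.625 alpha^2 j >= 0.9872. As the
  numbers 2 x_i sum to d, the sharp AM-GM bound prod_i y_i <= y_k exp(1 - y_k) then forces
  every gap into [0.4, 0.6]. This gives both claims, and it keeps
  lambda_max(A_(j+1)) <= lambda_max(A_j) + alpha below u_(j+1), so the induction goes on.
*)

section \<open>Conjugate transpose and the complex inner product\<close>

definition cadj :: "complex^'n^'m \<Rightarrow> complex^'m^'n" where
  "cadj M = (\<chi> i j. cnj (M$j$i))"

definition cinner :: "complex^'n \<Rightarrow> complex^'n \<Rightarrow> complex" where
  "cinner x y = (\<Sum>i\<in>UNIV. cnj (x$i) * y$i)"

definition hermitian :: "complex^'n^'n \<Rightarrow> bool" where
  "hermitian M \<longleftrightarrow> cadj M = M"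

definition unitary :: "complex^'n^'n \<Rightarrow> bool" where
  "unitary U \<longleftrightarrow> cadj U ** U = mat 1 \<and> U ** cadj U = mat 1"

definition diag_mat :: "('n::finite \<Rightarrow> real) \<Rightarrow> complex^'n^'n" where
  "diag_mat f = (\<chi> i j. if i = j then of_real (f i) else 0)"

lemma cadj_cadj [simp]: "cadj (cadj M) = M"
  by (simp add: cadj_def vec_eq_iff)

lemma cadj_add: "cadj (A + B) = cadj A + cadj B"
  by (simp add: cadj_def vec_eq_iff)

lemma cadj_sum: "finite S \<Longrightarrow> cadj (\<Sum>k\<in>S. f k) = (\<Sum>k\<in>S. cadj (f k))"
  by (induction S rule: finite_induct) (auto simp: cadj_add cadj_def vec_eq_iff)

lemma cadj_mat [simp]: "cadj (mat c :: complex^'n^'n) = mat (cnj c)"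
  by (auto simp: cadj_def vec_eq_iff mat_def)

lemma cinner_adjoint: "cinner (A *v x) y = cinner x (cadj A *v y)"
proof -
  have "cinner (A *v x) y = (\<Sum>i\<in>UNIV. \<Sum>j\<in>UNIV. cnj (A$i$j) * cnj (x$j) * y$i)"
    by (simp add: cinner_def matrix_vector_mult_def sum_distrib_right)
  also have "\<dots> = (\<Sum>j\<in>UNIV. \<Sum>i\<in>UNIV. cnj (A$i$j) * cnj (x$j) * y$i)"
    by (rule sum.swap)
  also have "\<dots> = cinner x (cadj A *v y)"
    by (simp add: cinner_def matrix_vector_mult_def cadj_def sum_distrib_left mult_ac)
  finally show ?thesis .
qed

lemma cinner_commute: "cinner y x = cnj (cinner x y)"
  by (simp add: cinner_def mult.commute)

lemma cinner_self: "cinner x x = of_real ((norm x)^2)"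
proof -
  have "(norm x)^2 = (\<Sum>i\<in>UNIV. (cmod (x$i))^2)"
    by (simp add: norm_vec_def L2_set_def sum_nonneg)
  moreover have "cnj (x$i) * x$i = of_real ((cmod (x$i))^2)" for i
    by (metis complex_norm_square mult.commute)
  ultimately show ?thesis by (simp add: cinner_def sum_nonneg)
qed

lemma cinner_add_right: "cinner z (a + b) = cinner z a + cinner z b"
  by (simp add: cinner_def distrib_left sum.distrib)

lemma cinner_add_left: "cinner (a + b) z = cinner a z + cinner b z"
  by (simp add: cinner_def distrib_right sum.distrib)

lemma cinner_diff_right: "cinner z (a - b) = cinner z a - cinner z b"
  by (simp add: cinner_def right_diff_distrib sum_subtractf)

lemma cinner_smult_right: "cinner z (c *s v) = c * cinner z v"
  by (simp add: cinner_def sum_distrib_left mult_ac)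

lemma cinner_smult_left: "cinner (c *s v) z = cnj c * cinner v z"
  by (simp add: cinner_def sum_distrib_left mult_ac)

lemma cinner_scaleR_right: "cinner z (r *\<^sub>R v) = r *\<^sub>R cinner z v"
  by (simp add: cinner_def scaleR_sum_right)

lemma cinner_scaleR_left: "cinner (r *\<^sub>R v) z = r *\<^sub>R cinner v z"
  by (simp add: cinner_def scaleR_sum_right)

lemma cinner_sum_right: "finite S \<Longrightarrow> cinner z (\<Sum>k\<in>S. f k) = (\<Sum>k\<in>S. cinner z (f k))"
  by (induction S rule: finite_induct) (auto simp: cinner_def distrib_left sum.distrib)

lemma cmatrix_vector_mult_scaleR: "(M::complex^'n^'m) *v (r *\<^sub>R z) = r *\<^sub>R (M *v z)"
  by (simp add: matrix_vector_mult_def vec_eq_iff scaleR_sum_right)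

lemma cinner_zero_left [simp]: "cinner 0 z = 0"
  by (simp add: cinner_def)

lemma matrix_vector_mult_smult: "(A::complex^'n^'m) *v (c *s x) = c *s (A *v x)"
  by (simp add: matrix_vector_mult_def vec_eq_iff sum_distrib_left mult_ac)

lemma matrix_add_rdistrib: "((A::'a::semiring_1^'n^'m) + B) ** C = A ** C + B ** C"
  by (simp add: matrix_matrix_mult_def vec_eq_iff sum.distrib algebra_simps)

lemma matrix_diff_ldistrib: "(A::'a::ring_1^'n^'m) ** (B - C) = A ** B - A ** C"
  by (simp add: matrix_matrix_mult_def vec_eq_iff sum_subtractf algebra_simps)

lemma matrix_diff_rdistrib: "((A::'a::ring_1^'n^'m) - B) ** C = A ** C - B ** C"
  by (simp add: matrix_matrix_mult_def vec_eq_iff sum_subtractf algebra_simps)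

lemma cinner_cauchy_schwarz:
  fixes v z :: "complex^'n"
  shows "(cmod (cinner v z))^2 \<le> (norm v)^2 * (norm z)^2"
proof -
  define a where "a = (\<chi> i. cmod (v$i) :: real^'n)"
  define b where "b = (\<chi> i. cmod (z$i) :: real^'n)"
  have "cmod (cinner v z) \<le> (\<Sum>i\<in>UNIV. cmod (v$i) * cmod (z$i))"
    unfolding cinner_def by (rule order_trans[OF norm_sum]) (simp add: norm_mult)
  also have "\<dots> = a \<bullet> b" by (simp add: a_def b_def inner_vec_def)
  also have "\<dots> \<le> norm a * norm b" by (rule norm_cauchy_schwarz)
  also have "norm a = norm v" by (simp add: a_def norm_vec_def)
  also have "norm b = norm z" by (simp add: b_def norm_vec_def)
  finally show ?thesis
    by (simp add: power_mult_distrib[symmetric] power_mono)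
qed

lemma hermitian_outer: "hermitian (outer x)"
  by (simp add: hermitian_def cadj_def outer_def vec_eq_iff mult.commute)

lemma outer_matrix_vector_mult: "outer (B *v x) = B ** outer x ** cadj B"
proof -
  have "(B ** outer x ** cadj B)$i$j = (B *v x)$i * cnj ((B *v x)$j)" for i j
  proof -
    have "(B ** outer x ** cadj B)$i$j =
        (\<Sum>l\<in>UNIV. (\<Sum>k\<in>UNIV. B$i$k * (x$k * cnj (x$l))) * cnj (B$j$l))"
      by (simp add: matrix_matrix_mult_def outer_def cadj_def)
    also have "\<dots> = (\<Sum>k\<in>UNIV. B$i$k * x$k) * (\<Sum>l\<in>UNIV. cnj (B$j$l) * cnj (x$l))"
      by (simp add: sum_distrib_right sum_distrib_left mult_ac)
    finally show ?thesis by (simp add: matrix_vector_mult_def)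
  qed
  then show ?thesis by (simp add: vec_eq_iff outer_def)
qed

lemma cinner_outer: "cinner z (outer v *v z) = of_real ((cmod (cinner v z))^2)"
proof -
  have "outer v *v z = cinner v z *s v"
    unfolding outer_def cinner_def matrix_vector_mult_def
    by (simp add: vec_eq_iff sum_distrib_left mult_ac)
  then have "cinner z (outer v *v z) = cinner v z * cnj (cinner v z)"
    by (simp add: cinner_smult_right cinner_commute[of z v])
  then show ?thesis by (metis complex_norm_square)
qed

section \<open>The spectral theorem for Hermitian matrices\<close>

lemma hermitian_cinner_swap:
  "hermitian M \<Longrightarrow> cinner (M *v x) y = cinner x (M *v y)"
  using cinner_adjoint[of M x y] by (simp add: hermitian_def)

lemma hermitian_quadratic_form_real:
  assumes "hermitian M"
  shows "cinner z (M *v z) = of_real (Re (cinner z (M *v z)))"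
proof -
  have "cinner z (M *v z) = cnj (cinner z (M *v z))"
    using hermitian_cinner_swap[OF assms, of z z] cinner_commute[of "M *v z" z] by simp
  then show ?thesis by (metis Reals_cnj_iff complex_is_Real_iff of_real_Re)
qed

lemma continuous_on_cinner_right: "continuous_on S (\<lambda>z. cinner e z)"
  unfolding cinner_def
  by (intro continuous_intros linear_continuous_on bounded_linear_vec_nth)

lemma continuous_on_quadratic_form: "continuous_on S (\<lambda>z. Re (cinner z ((M::complex^'n^'n) *v z)))"
  unfolding cinner_def matrix_vector_mult_def
  by (intro continuous_intros linear_continuous_on bounded_linear_vec_nth)

lemma quadratic_ge_linear_imp_zero:
  fixes R C :: real
  assumes "\<And>t. 2 * t * R \<le> t * t * C" and "0 \<le> R"
  shows "R = 0"
proof (rule ccontr)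
  assume "R \<noteq> 0"
  define t where "t = R / (\<bar>C\<bar> + 1)"
  have "t > 0" using \<open>R \<noteq> 0\<close> assms(2) by (simp add: t_def)
  have "2 * t * R \<le> t * t * C" by (rule assms(1))
  then have "2 * R \<le> t * C" using \<open>t > 0\<close> by (simp add: mult.assoc)
  also have "t * C < t * (\<bar>C\<bar> + 1)"
    using \<open>t > 0\<close> by (intro mult_strict_left_mono) auto
  also have "\<dots> = R" by (simp add: t_def)
  finally show False using assms(2) by simp
qed

(* Maximality along the line z + t r through the residual r gives 2 t |r|^2 <= C t^2 for
   all real t, hence r = 0. *)

lemma rayleigh_maximizer_eigenvector:
  fixes M :: "complex^'n^'n" and z :: "complex^'n"
  defines "\<mu> \<equiv> Re (cinner z (M *v z))"
  defines "r \<equiv> M *v z - of_real \<mu> *s z"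
  assumes herm: "hermitian M" and unit: "cinner z z = 1"
    and max: "\<And>t::real. Re (cinner (z + t *\<^sub>R r) (M *v (z + t *\<^sub>R r))) \<le> \<mu> * (norm (z + t *\<^sub>R r))^2"
  shows "M *v z = of_real \<mu> *s z"
proof -
  have zMz: "cinner z (M *v z) = of_real \<mu>"
    using hermitian_quadratic_form_real[OF herm] by (simp add: \<mu>_def)
  have Mz: "M *v z = r + of_real \<mu> *s z" by (simp add: r_def)
  have zr: "cinner z r = 0" by (simp add: r_def cinner_diff_right cinner_smult_right unit zMz)
  have rz: "cinner r z = 0" using zr cinner_commute[of r z] by simp
  have zMr: "cinner z (M *v r) = cinner r r"
    using hermitian_cinner_swap[OF herm, of z r] by (simp add: Mz cinner_add_left cinner_smult_left zr)
  have rMz: "cinner r (M *v z) = cinner r r"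
    by (simp add: Mz cinner_add_right cinner_smult_right rz)
  define R where "R = (norm r)^2"
  have rr: "cinner r r = of_real R" by (simp add: R_def cinner_self)
  have "2 * t * R \<le> t * t * (\<mu> * R - Re (cinner r (M *v r)))" for t
  proof -
    have "Re (cinner (z + t *\<^sub>R r) (M *v (z + t *\<^sub>R r))) = \<mu> + 2 * t * R + t * t * Re (cinner r (M *v r))"
      by (simp add: matrix_vector_right_distrib cmatrix_vector_mult_scaleR cinner_add_left
          cinner_add_right cinner_scaleR_left cinner_scaleR_right zMz zMr rMz rr algebra_simps)
    moreover have "(norm (z + t *\<^sub>R r))^2 = 1 + t * t * R"
    proof -
      have "cinner (z + t *\<^sub>R r) (z + t *\<^sub>R r) = of_real (1 + t * t * R)"
        by (simp add: cinner_add_left cinner_add_right cinner_scaleR_left cinner_scaleR_right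
            unit zr rz rr) (simp add: scaleR_conv_of_real)
      then show ?thesis by (simp only: cinner_self of_real_eq_iff)
    qed
    ultimately show ?thesis using max[of t] by (simp add: algebra_simps)
  qed
  then have "R = 0" by (rule quadratic_ge_linear_imp_zero) (simp add: R_def)
  then show ?thesis by (simp add: R_def r_def)
qed

lemma hermitian_orthogonal_eigenvectors_invariant:
  assumes herm: "hermitian M" and eig: "\<forall>e\<in>E. \<exists>\<nu>::real. M *v e = of_real \<nu> *s e"
    and z: "\<forall>e\<in>E. cinner e z = 0"
  shows "\<forall>e\<in>E. cinner e (M *v z) = 0"
proof
  fix e assume "e \<in> E"
  then obtain \<nu> :: real where ev: "M *v e = of_real \<nu> *s e" using eig by blast
  have "cinner e (M *v z) = cinner (M *v e) z" using hermitian_cinner_swap[OF herm, of e z] by simp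
  also have "\<dots> = 0" using z \<open>e \<in> E\<close> by (simp add: ev cinner_smult_left)
  finally show "cinner e (M *v z) = 0" .
qed

lemma closed_orthogonal_complement: "closed {z::complex^'n. \<forall>e\<in>E. cinner e z = 0}"
proof -
  have "{z. \<forall>e\<in>E. cinner e z = 0} = (\<Inter>e\<in>E. {z::complex^'n. cinner e z = 0})" by auto
  moreover have "closed {z::complex^'n. cinner e z = 0}" for e
    by (intro closed_Collect_eq continuous_on_cinner_right continuous_on_const)
  ultimately show ?thesis by auto
qed

lemma hermitian_eigenvector_orthogonal_exists:
  fixes M :: "complex^'n^'n" and E :: "(complex^'n) set"
  assumes herm: "hermitian M"
    and eig: "\<forall>e\<in>E. \<exists>\<nu>::real. M *v e = of_real \<nu> *s e"
    and z0: "z0 \<noteq> 0" "\<forall>e\<in>E. cinner e z0 = 0"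
  shows "\<exists>z \<mu>. (\<forall>e\<in>E. cinner e z = 0) \<and> cinner z z = 1 \<and> M *v z = of_real \<mu> *s z"
proof -
  define W where "W = {z. \<forall>e\<in>E. cinner e z = 0}"
  define f where "f z = Re (cinner z (M *v z))" for z
  define K where "K = W \<inter> sphere 0 1"
  have "compact K"
    unfolding K_def W_def by (simp add: closed_Int_compact closed_orthogonal_complement)
  moreover have "(1 / norm z0) *\<^sub>R z0 \<in> K"
    using z0 by (auto simp: K_def W_def cinner_scaleR_right)
  ultimately obtain z where zK: "z \<in> K" and zmax: "\<forall>y\<in>K. f y \<le> f z"
    using continuous_attains_sup[of K f] continuous_on_quadratic_form unfolding f_def by blast
  have zW: "z \<in> W" and zz: "cinner z z = 1" using zK by (auto simp: K_def cinner_self)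
  have fW: "f y \<le> f z * (norm y)^2" if "y \<in> W" for y
  proof (cases "y = 0")
    case True then show ?thesis by (simp add: f_def)
  next
    case False
    have "(1 / norm y) *\<^sub>R y \<in> K" using that False by (auto simp: K_def W_def cinner_scaleR_right)
    then have "f ((1 / norm y) *\<^sub>R y) \<le> f z" using zmax by blast
    then have "f y / (norm y)^2 \<le> f z"
      by (simp add: f_def cmatrix_vector_mult_scaleR cinner_scaleR_left cinner_scaleR_right
          power2_eq_square)
    then show ?thesis using False by (simp add: divide_le_eq mult.commute)
  qed
  define r where "r = M *v z - of_real (f z) *s z"
  have "r \<in> W"
    using zW hermitian_orthogonal_eigenvectors_invariant[OF herm eig, of z]
    by (simp add: W_def r_def cinner_diff_right cinner_smult_right)
  then have "z + t *\<^sub>R r \<in> W" for t :: real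
    using zW by (simp add: W_def cinner_add_right cinner_scaleR_right)
  then have "M *v z = of_real (f z) *s z"
    using rayleigh_maximizer_eigenvector[OF herm zz] fW unfolding f_def r_def by blast
  then show ?thesis using zW zz unfolding W_def by blast
qed

definition orthonormal :: "(complex^'n) set \<Rightarrow> bool" where
  "orthonormal E \<longleftrightarrow> (\<forall>e\<in>E. cinner e e = 1) \<and> (\<forall>e\<in>E. \<forall>e'\<in>E. e \<noteq> e' \<longrightarrow> cinner e e' = 0)"

lemma cinner_axis: "cinner e (axis i 1) = cnj (e$i)"
  by (simp add: cinner_def axis_def if_distrib[of "\<lambda>x. cnj _ * x"] cong: if_cong)

lemma orthonormal_complete_card:
  fixes E :: "(complex^'n) set"
  assumes fin: "finite E" and on: "orthonormal E"
    and complete: "\<forall>z. (\<forall>e\<in>E. cinner e z = 0) \<longrightarrow> z = 0"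
  shows "card E = CARD('n)"
proof -
  have expand: "y = (\<Sum>e\<in>E. cinner e y *s e)" for y
  proof -
    have "cinner e' (\<Sum>e\<in>E. cinner e y *s e) = cinner e' y" if "e' \<in> E" for e'
    proof -
      have "cinner e' (\<Sum>e\<in>E. cinner e y *s e) = (\<Sum>e\<in>E. cinner e y * cinner e' e)"
        by (simp add: fin cinner_sum_right cinner_smult_right)
      also have "\<dots> = (\<Sum>e\<in>E. if e = e' then cinner e' y else 0)"
        using on that by (intro sum.cong) (auto simp: orthonormal_def)
      finally show ?thesis using fin that by simp
    qed
    then have "\<forall>e\<in>E. cinner e (y - (\<Sum>e\<in>E. cinner e y *s e)) = 0"
      by (simp add: cinner_diff_right)
    then have "y - (\<Sum>e\<in>E. cinner e y *s e) = 0" using complete by blast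
    then show ?thesis by simp
  qed
  have one: "(\<Sum>e\<in>E. cnj (e$i) * e$i) = 1" for i
  proof -
    let ?y = "axis i 1 :: complex^'n"
    have "cinner ?y ?y = (\<Sum>e\<in>E. cinner e ?y * cinner ?y e)"
      by (subst (2) expand) (simp add: fin cinner_sum_right cinner_smult_right)
    also have "\<dots> = (\<Sum>e\<in>E. cnj (e$i) * e$i)"
      by (simp add: cinner_axis cinner_commute[of ?y])
    finally show ?thesis using cinner_axis[of ?y i] by (simp add: axis_def)
  qed
  have "of_nat CARD('n) = (\<Sum>i\<in>(UNIV::'n set). \<Sum>e\<in>E. cnj (e$i) * e$i)"
    using one by simp
  also have "\<dots> = (\<Sum>e\<in>E. cinner e e)" by (simp add: cinner_def sum.swap[of _ E])
  also have "\<dots> = of_nat (card E)" using on by (simp add: orthonormal_def)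
  finally show ?thesis by (simp only: of_nat_eq_iff)
qed

lemma hermitian_orthonormal_eigenvectors:
  fixes M :: "complex^'n^'n"
  assumes herm: "hermitian M" and "k \<le> CARD('n)"
  shows "\<exists>E. finite E \<and> card E = k \<and> orthonormal E \<and> (\<forall>e\<in>E. \<exists>\<mu>::real. M *v e = of_real \<mu> *s e)"
  using \<open>k \<le> CARD('n)\<close>
proof (induction k)
  case 0
  show ?case by (intro exI[of _ "{}"]) (simp add: orthonormal_def)
next
  case (Suc k)
  then obtain E where E: "finite E" "card E = k" "orthonormal E"
      "\<forall>e\<in>E. \<exists>\<mu>::real. M *v e = of_real \<mu> *s e" by auto
  have "\<not> (\<forall>z. (\<forall>e\<in>E. cinner e z = 0) \<longrightarrow> z = 0)"
    using orthonormal_complete_card[OF E(1) E(3)] E(2) Suc.prems by auto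
  then obtain z0 where "z0 \<noteq> 0" "\<forall>e\<in>E. cinner e z0 = 0" by auto
  then obtain z \<mu> where z: "\<forall>e\<in>E. cinner e z = 0" "cinner z z = 1" "M *v z = of_real \<mu> *s z"
    using hermitian_eigenvector_orthogonal_exists[OF herm E(4)] by blast
  have "z \<notin> E" using z by auto
  moreover have "\<forall>e\<in>E. cinner z e = 0"
    using z(1) by (metis cinner_commute complex_cnj_zero)
  then have "orthonormal (insert z E)"
    using E(3) z(1,2) unfolding orthonormal_def by blast
  ultimately show ?case using E z by (intro exI[of _ "insert z E"]) auto
qed

theorem hermitian_unitary_diagonalization:
  fixes M :: "complex^'n^'n"
  assumes herm: "hermitian M"
  obtains U \<mu> where "unitary U" "M = U ** diag_mat \<mu> ** cadj U"
proof -
  obtain E where E: "finite E" "card E = CARD('n)" "orthonormal E"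
      "\<forall>e\<in>E. \<exists>\<mu>::real. M *v e = of_real \<mu> *s e"
    using hermitian_orthonormal_eigenvectors[OF herm order_refl] by auto
  obtain g where g: "\<forall>e\<in>E. M *v e = of_real (g e) *s e" using E(4) by metis
  obtain h where h: "bij_betw h (UNIV::'n set) E"
    using finite_same_card_bij[of "UNIV::'n set" E] E by auto
  have hE: "h i \<in> E" for i using h by (auto simp: bij_betw_def)
  have hinj: "h i = h j \<Longrightarrow> i = j" for i j using h by (auto simp: bij_betw_def inj_on_def)
  define U where "U = (\<chi> i j. (h j)$i :: complex^'n^'n)"
  define \<mu> where "\<mu> i = g (h i)" for i
  have U1: "cadj U ** U = mat 1"
  proof -
    have "(cadj U ** U)$i$j = cinner (h i) (h j)" for i j
      by (simp add: matrix_matrix_mult_def cadj_def U_def cinner_def)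
    moreover have "cinner (h i) (h j) = (if i = j then 1 else 0)" for i j
      using E(3) hE hinj unfolding orthonormal_def by metis
    ultimately show ?thesis by (simp add: vec_eq_iff mat_def)
  qed
  then have U2: "U ** cadj U = mat 1" by (simp add: matrix_left_right_inverse)
  have "M ** U = U ** diag_mat \<mu>"
    using g hE
    by (simp add: vec_eq_iff matrix_matrix_mult_def matrix_vector_mult_def U_def diag_mat_def \<mu>_def
        if_distrib mult.commute cong: if_cong)
  then have "M = U ** diag_mat \<mu> ** cadj U"
    by (metis U2 matrix_mul_assoc matrix_mul_rid)
  with U1 U2 show thesis by (intro that) (auto simp: unitary_def)
qed

section \<open>Unitarily diagonalised matrices\<close>

lemma diag_mat_mult_vector: "(diag_mat \<mu> *v y)$i = of_real (\<mu> i) * y$i"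
  by (simp add: diag_mat_def matrix_vector_mult_def if_distrib if_distribR cong: if_cong)

lemma det_diag_mat: "det (diag_mat f) = of_real (\<Prod>i\<in>UNIV. f i)"
  by (subst det_diagonal) (auto simp: diag_mat_def)

lemma unitary_adjoint_mult_vector: "unitary U \<Longrightarrow> cadj U *v (U *v x) = x"
  by (simp add: unitary_def matrix_vector_mul_assoc)

lemma unitary_mult_adjoint_vector: "unitary U \<Longrightarrow> U *v (cadj U *v x) = x"
  by (simp add: unitary_def matrix_vector_mul_assoc)

lemma det_unitary_conj:
  assumes "unitary U"
  shows "det (U ** X ** cadj U) = det X"
proof -
  have "det (U ** X ** cadj U) = det X * det (U ** cadj U)" by (simp add: det_mul)
  then show ?thesis using assms by (simp add: unitary_def)
qed

lemma eigs_diag_mat: "eigs (diag_mat \<mu>) = of_real ` range \<mu>"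
proof (intro set_eqI iffI)
  fix c :: complex assume "c \<in> eigs (diag_mat \<mu>)"
  then obtain y where y: "y \<noteq> 0" "diag_mat \<mu> *v y = c *s y" by (auto simp: eigs_def)
  then obtain i where "y$i \<noteq> 0" by (auto simp: vec_eq_iff)
  moreover have "of_real (\<mu> i) * y$i = c * y$i"
    using y(2) by (metis diag_mat_mult_vector vector_smult_component)
  ultimately have "c = of_real (\<mu> i)" by simp
  then show "c \<in> of_real ` range \<mu>" by auto
next
  fix c :: complex assume "c \<in> of_real ` range \<mu>"
  then obtain i where "c = of_real (\<mu> i)" by auto
  then have "diag_mat \<mu> *v axis i 1 = c *s axis i 1"
    by (simp add: vec_eq_iff diag_mat_mult_vector axis_def)
  moreover have "axis i (1::complex) \<noteq> 0" by (simp add: axis_eq_0_iff)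
  ultimately show "c \<in> eigs (diag_mat \<mu>)" unfolding eigs_def by blast
qed

lemma eigs_unitary_conj:
  assumes U: "unitary U"
  shows "eigs (U ** X ** cadj U) = eigs X"
proof -
  have conj: "(U ** X ** cadj U) *v (U *v y) = U *v (X *v y)" for y
    using U by (simp add: matrix_vector_mul_assoc[symmetric] unitary_adjoint_mult_vector)
  show ?thesis
  proof (intro set_eqI iffI)
    fix c assume "c \<in> eigs (U ** X ** cadj U)"
    then obtain x where x: "x \<noteq> 0" "(U ** X ** cadj U) *v x = c *s x" by (auto simp: eigs_def)
    have "U *v (X *v (cadj U *v x)) = U *v (c *s (cadj U *v x))"
      using x(2) conj[of "cadj U *v x"] U
      by (simp add: unitary_mult_adjoint_vector matrix_vector_mult_smult)
    then have "X *v (cadj U *v x) = c *s (cadj U *v x)"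
      by (metis U unitary_adjoint_mult_vector)
    moreover have "cadj U *v x \<noteq> 0"
      using x(1) by (metis U matrix_vector_mult_0_right unitary_mult_adjoint_vector)
    ultimately show "c \<in> eigs X" by (auto simp: eigs_def)
  next
    fix c assume "c \<in> eigs X"
    then obtain y where y: "y \<noteq> 0" "X *v y = c *s y" by (auto simp: eigs_def)
    have "U *v y \<noteq> 0" by (metis U matrix_vector_mult_0_right unitary_adjoint_mult_vector y(1))
    moreover have "(U ** X ** cadj U) *v (U *v y) = c *s (U *v y)"
      by (simp add: conj y(2) matrix_vector_mult_smult)
    ultimately show "c \<in> eigs (U ** X ** cadj U)" by (auto simp: eigs_def)
  qed
qed

lemma eigs_unitary_diag: "unitary U \<Longrightarrow> eigs (U ** diag_mat \<mu> ** cadj U) = of_real ` range \<mu>"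
  by (simp add: eigs_unitary_conj eigs_diag_mat)

lemma lambda_max_unitary_diag:
  "unitary U \<Longrightarrow> lambda_max (U ** diag_mat \<mu> ** cadj U) = Max (range \<mu>)"
  by (simp add: lambda_max_def eigs_unitary_diag image_image)

lemma lambda_min_unitary_diag:
  "unitary U \<Longrightarrow> lambda_min (U ** diag_mat \<mu> ** cadj U) = Min (range \<mu>)"
  by (simp add: lambda_min_def eigs_unitary_diag image_image)

lemma unitary_diag_mat_const:
  assumes "unitary U"
  shows "U ** diag_mat (\<lambda>i. c) ** cadj U = mat (of_real c)"
proof -
  have "diag_mat (\<lambda>i. c) = mat (of_real c)" by (simp add: diag_mat_def mat_def)
  moreover have "U ** mat (of_real c) = mat (of_real c) ** U"
    by (simp add: matrix_matrix_mult_def mat_def vec_eq_iff if_distrib if_distribR mult.commute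
        cong: if_cong)
  ultimately show ?thesis using assms
    by (metis matrix_mul_assoc matrix_mul_rid unitary_def)
qed

lemma mat_minus_unitary_diag:
  assumes U: "unitary U"
  shows "mat (of_real c) - U ** diag_mat \<mu> ** cadj U = U ** diag_mat (\<lambda>i. c - \<mu> i) ** cadj U"
proof -
  have "diag_mat (\<lambda>i. c) - diag_mat \<mu> = diag_mat (\<lambda>i. c - \<mu> i)"
    by (simp add: diag_mat_def vec_eq_iff)
  moreover have "U ** (diag_mat (\<lambda>i. c) - diag_mat \<mu>) ** cadj U =
      U ** diag_mat (\<lambda>i. c) ** cadj U - U ** diag_mat \<mu> ** cadj U"
    by (simp add: matrix_diff_ldistrib matrix_diff_rdistrib)
  ultimately show ?thesis by (simp add: unitary_diag_mat_const[OF U])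
qed

lemma norm_adjoint_unitary_components:
  assumes "unitary U"
  shows "(\<Sum>i\<in>UNIV. (cmod ((cadj U *v z)$i))^2) = (norm z)^2"
proof -
  have "of_real (\<Sum>i\<in>UNIV. (cmod ((cadj U *v z)$i))^2) = cinner (cadj U *v z) (cadj U *v z)"
    by (simp add: cinner_self norm_vec_def L2_set_def sum_nonneg)
  also have "\<dots> = cinner z z"
    using assms by (simp add: cinner_adjoint unitary_mult_adjoint_vector)
  finally show ?thesis by (simp only: cinner_self of_real_eq_iff)
qed

lemma quadratic_form_unitary_diag:
  "cinner z ((U ** diag_mat \<mu> ** cadj U) *v z) =
     of_real (\<Sum>i\<in>UNIV. \<mu> i * (cmod ((cadj U *v z)$i))^2)"
proof -
  define w where "w = cadj U *v z"
  have "(U ** diag_mat \<mu> ** cadj U) *v z = U *v (diag_mat \<mu> *v w)"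
    by (simp add: w_def matrix_mul_assoc matrix_vector_mul_assoc[symmetric])
  then have "cinner z ((U ** diag_mat \<mu> ** cadj U) *v z) = cinner w (diag_mat \<mu> *v w)"
    using cinner_adjoint[of "cadj U" z] by (simp add: w_def)
  also have "\<dots> = (\<Sum>i\<in>UNIV. of_real (\<mu> i) * (w$i * cnj (w$i)))"
    by (simp add: cinner_def diag_mat_mult_vector mult_ac)
  finally show ?thesis by (simp add: w_def complex_norm_square[symmetric])
qed

lemma diag_entry_eq_sum_weights:
  assumes U: "unitary U" and fin: "finite K"
    and A: "U ** diag_mat \<mu> ** cadj U = (\<Sum>k\<in>K. outer (g k))"
  shows "\<mu> i = (\<Sum>k\<in>K. (cmod ((cadj U *v g k)$i))^2)"
proof -
  have "cadj U ** (U ** diag_mat \<mu> ** cadj U) ** U = (cadj U ** U) ** diag_mat \<mu> ** (cadj U ** U)"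
    by (simp add: matrix_mul_assoc)
  then have "diag_mat \<mu> = cadj U ** (U ** diag_mat \<mu> ** cadj U) ** U"
    using U by (simp add: unitary_def)
  also have "\<dots> = (\<Sum>k\<in>K. outer (cadj U *v g k))"
    unfolding A using fin
    by (induction K rule: finite_induct)
       (simp_all add: matrix_add_ldistrib matrix_add_rdistrib outer_matrix_vector_mult)
  finally have sum: "diag_mat \<mu> = (\<Sum>k\<in>K. outer (cadj U *v g k))" .
  have "of_real (\<mu> i) = (diag_mat \<mu>)$i$i" by (simp add: diag_mat_def)
  also have "\<dots> = (\<Sum>k\<in>K. outer (cadj U *v g k))$i$i" by (simp only: sum)
  also have "\<dots> = of_real (\<Sum>k\<in>K. (cmod ((cadj U *v g k)$i))^2)"
    by (simp add: sum_component outer_def complex_norm_square[symmetric])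
  finally show ?thesis by (simp only: of_real_eq_iff)
qed

lemma hermitian_quadratic_form_le_lambda_max:
  assumes "hermitian A"
  shows "Re (cinner z (A *v z)) \<le> lambda_max A * (norm z)^2"
proof -
  obtain U \<mu> where U: "unitary U" and A: "A = U ** diag_mat \<mu> ** cadj U"
    using hermitian_unitary_diagonalization[OF assms] .
  have "Re (cinner z (A *v z)) = (\<Sum>i\<in>UNIV. \<mu> i * (cmod ((cadj U *v z)$i))^2)"
    by (simp add: A quadratic_form_unitary_diag)
  also have "\<dots> \<le> (\<Sum>i\<in>UNIV. Max (range \<mu>) * (cmod ((cadj U *v z)$i))^2)"
    by (intro sum_mono mult_right_mono) auto
  also have "\<dots> = lambda_max A * (norm z)^2"
    by (simp add: A U lambda_max_unitary_diag norm_adjoint_unitary_components sum_distrib_left[symmetric])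
  finally show ?thesis .
qed

lemma hermitian_lambda_max_attained:
  assumes "hermitian A"
  obtains z where "norm z = 1" "Re (cinner z (A *v z)) = lambda_max A"
proof -
  obtain U \<mu> where U: "unitary U" and A: "A = U ** diag_mat \<mu> ** cadj U"
    using hermitian_unitary_diagonalization[OF assms] .
  have "Max (range \<mu>) \<in> range \<mu>" by (rule Max_in) auto
  then obtain k where k: "Max (range \<mu>) = \<mu> k" by (rule rangeE)
  define z where "z = U *v axis k 1"
  have Uz: "cadj U *v z = axis k 1" using U by (simp add: z_def unitary_adjoint_mult_vector)
  have "(norm z)^2 = 1"
    using norm_adjoint_unitary_components[OF U, of z]
    by (simp add: Uz axis_def if_distrib[of "\<lambda>x. (cmod x)^2"] cong: if_cong)
  then have "norm z = 1" using norm_ge_zero[of z] by (auto simp: power2_eq_1_iff)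
  moreover have "Re (cinner z (A *v z)) = \<mu> k"
    by (simp add: A quadratic_form_unitary_diag Uz axis_def if_distrib[of "\<lambda>x. (cmod x)^2"]
        if_distrib[of "\<lambda>x. \<mu> _ * x"] cong: if_cong)
  moreover have "lambda_max A = \<mu> k" by (simp add: A U lambda_max_unitary_diag k)
  ultimately show thesis using that by simp
qed

lemma lambda_max_add_outer_le:
  assumes "hermitian A"
  shows "lambda_max (A + outer w) \<le> lambda_max A + (norm w)^2"
proof -
  have "hermitian (A + outer w)"
    using assms hermitian_outer by (simp add: hermitian_def cadj_add)
  then obtain z where z: "norm z = 1" and
      max: "Re (cinner z ((A + outer w) *v z)) = lambda_max (A + outer w)"
    by (rule hermitian_lambda_max_attained)
  have "Re (cinner z ((A + outer w) *v z)) = Re (cinner z (A *v z)) + (cmod (cinner w z))^2"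
    by (simp add: matrix_vector_mult_add_rdistrib cinner_add_right cinner_outer)
  also have "\<dots> \<le> lambda_max A + (norm w)^2"
  proof -
    have "Re (cinner z (A *v z)) \<le> lambda_max A"
      using hermitian_quadratic_form_le_lambda_max[OF assms, of z] z by simp
    moreover have "(cmod (cinner w z))^2 \<le> (norm w)^2"
      using cinner_cauchy_schwarz[of w z] z by simp
    ultimately show ?thesis by linarith
  qed
  finally show ?thesis using max by simp
qed

lemma det_mat_minus_unitary_diag:
  assumes "unitary U"
  shows "det (mat (of_real c) - U ** diag_mat \<mu> ** cadj U) = of_real (\<Prod>i\<in>UNIV. c - \<mu> i)"
  using assms by (simp add: mat_minus_unitary_diag det_unitary_conj det_diag_mat)

lemma cond_num_unitary_diag_le:
  assumes "unitary U" and "0 < a" and "\<And>i. a \<le> x i \<and> x i \<le> b"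
  shows "cond_num (U ** diag_mat x ** cadj U) \<le> b / a"
proof -
  have "cond_num (U ** diag_mat x ** cadj U) = Max (range x) / Min (range x)"
    using assms(1) by (simp add: cond_num_def lambda_max_unitary_diag lambda_min_unitary_diag)
  also have "\<dots> \<le> b / a"
  proof -
    have "0 \<le> b" using assms(2) assms(3)[of undefined] by linarith
    then show ?thesis using assms(2,3) by (intro frac_le) auto
  qed
  finally show ?thesis .
qed

section \<open>The determinant of a diagonal matrix minus a rank-one matrix\<close>

lemma det_diagonal_but_one_row:
  fixes a :: "'n::finite \<Rightarrow> 'a::comm_ring_1"
  shows "det (\<chi> i j. if i = k then z$j else if i = j then a i else 0) = z$k * (\<Prod>l\<in>UNIV-{k}. a l)"
proof -
  define A where "A = (\<chi> i j. if i = k then z$j else if i = j then a i else 0 :: 'a^'n^'n)"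
  have vanish: "(\<Prod>i\<in>UNIV. A$i$p i) = 0" if p: "p permutes UNIV" "p \<noteq> id" for p
  proof -
    have "\<not> p permutes {k}" using p(2) by simp
    then obtain i where "i \<noteq> k" "p i \<noteq> i"
      using permutes_superset[OF p(1), of "{k}"] by blast
    then have "A$i$p i = 0" by (simp add: A_def)
    then show ?thesis by (intro prod_zero) auto
  qed
  have "det A = (\<Sum>p\<in>{id}. of_int (sign p) * (\<Prod>i\<in>UNIV. A$i$p i))"
    unfolding det_def
    by (rule sum.mono_neutral_right) (auto simp: finite_permutations permutes_id vanish)
  also have "\<dots> = (\<Prod>i\<in>UNIV. if i = k then z$k else a i)"
    by (auto simp: A_def sign_id intro: prod.cong)
  also have "\<dots> = z$k * (\<Prod>l\<in>UNIV-{k}. a l)"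
    by (simp add: prod.remove[of UNIV k] cong: prod.cong) (auto intro: prod.cong)
  finally show ?thesis by (simp add: A_def)
qed

lemma det_subtract_multiples_of_row:
  fixes r :: "'n::finite \<Rightarrow> 'a::comm_ring_1^'n" and f :: "'n \<Rightarrow> 'a"
  assumes "k \<notin> T"
  shows "det (\<chi> i. if i = k then c else if i \<in> T then r i - f i *s c else r i)
           = det (\<chi> i. if i = k then c else r i)"
proof -
  have "finite T" by simp
  then show ?thesis using assms
  proof (induction T rule: finite_induct)
    case empty
    have "(\<chi> i. if i = k then c else if i \<in> {} then r i - f i *s c else r i) =
        (\<chi> i. if i = k then c else r i)"
      by (simp add: vec_eq_iff)
    then show ?case by simp
  next
    case (insert t T)
    define A where "A = (\<chi> i. if i = k then c else if i \<in> insert t T then r i - f i *s c else r i)"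
    have "t \<noteq> k" using insert.prems by auto
    have "det A = det (\<chi> i. if i = t then row t A + f t *s row k A else row i A)"
      by (rule det_row_operation[OF \<open>t \<noteq> k\<close>, symmetric])
    also have "(\<chi> i. if i = t then row t A + f t *s row k A else row i A) =
        (\<chi> i. if i = k then c else if i \<in> T then r i - f i *s c else r i)"
      using \<open>t \<noteq> k\<close> insert.hyps(2) by (auto simp: vec_eq_iff row_def A_def)
    finally show ?case using insert.IH insert.prems by (simp add: A_def)
  qed
qed

lemma det_diagonal_minus_rank_one:
  fixes a b :: "'n::finite \<Rightarrow> 'a::comm_ring_1" and c :: "'a^'n"
  shows "det (\<chi> i j. (if i = j then a i else 0) - (if i \<in> S then b i * c$j else 0)) =
    (\<Prod>l\<in>UNIV. a l) - (\<Sum>i\<in>S. b i * c$i * (\<Prod>l\<in>UNIV-{i}. a l))"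
proof -
  have "finite S" by simp
  then show ?thesis
  proof (induction S rule: finite_induct)
    case empty
    show ?case by (subst det_diagonal) auto
  next
    case (insert k S)
    define D where "D i = (\<chi> j. if i = j then a i else 0)" for i
    define N where "N S' = (\<chi> i j. (if i = j then a i else 0) - (if i \<in> S' then b i * c$j else 0))"
      for S'
    have "N (insert k S) = (\<chi> i. if i = k then N S $ i + (- b k) *s c else N S $ i)"
      using insert.hyps(2) by (auto simp: vec_eq_iff N_def)
    then have "det (N (insert k S)) = det (N S) - b k * det (\<chi> i. if i = k then c else N S $ i)"
      by (simp add: det_row_add det_row_mul)
    also have "(\<chi> i. if i = k then c else N S $ i) =
        (\<chi> i. if i = k then c else if i \<in> S then D i - b i *s c else D i)"
      by (auto simp: vec_eq_iff N_def D_def)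
    also have "det \<dots> = det (\<chi> i. if i = k then c else D i)"
      by (rule det_subtract_multiples_of_row[OF insert.hyps(2)])
    also have "(\<chi> i. if i = k then c else D i) = (\<chi> i j. if i = k then c$j else if i = j then a i else 0)"
      by (simp add: vec_eq_iff D_def)
    also have "det \<dots> = c$k * (\<Prod>l\<in>UNIV-{k}. a l)" by (rule det_diagonal_but_one_row)
    finally show ?case using insert.IH insert.hyps by (simp add: N_def algebra_simps)
  qed
qed

lemma det_diag_mat_minus_outer:
  "det (diag_mat y - outer w) =
    of_real ((\<Prod>l\<in>UNIV. y l) - (\<Sum>i\<in>UNIV. (cmod (w$i))^2 * (\<Prod>l\<in>UNIV-{i}. y l)))"
proof -
  have "diag_mat y - outer w =
     (\<chi> i j. (if i = j then of_real (y i) else 0) - (if i \<in> UNIV then w$i * (\<chi> j. cnj (w$j))$j else 0))"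
    by (simp add: diag_mat_def outer_def vec_eq_iff)
  then have "det (diag_mat y - outer w) = (\<Prod>l\<in>UNIV. of_real (y l)) -
      (\<Sum>i\<in>UNIV. w$i * (\<chi> j. cnj (w$j))$i * (\<Prod>l\<in>UNIV-{i}. of_real (y l)))"
    by (simp only: det_diagonal_minus_rank_one)
  then show ?thesis by (simp add: complex_norm_square[symmetric] of_real_prod)
qed

lemma prod_minus_sum_prod_remove:
  fixes y w :: "'n::finite \<Rightarrow> real"
  assumes "\<And>i. y i \<noteq> 0"
  shows "(\<Prod>l\<in>UNIV. y l) - (\<Sum>i\<in>UNIV. w i * (\<Prod>l\<in>UNIV-{i}. y l)) =
    (\<Prod>l\<in>UNIV. y l) * (1 - (\<Sum>i\<in>UNIV. w i / y i))"
proof -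
  have "(\<Prod>l\<in>UNIV-{i}. y l) = (\<Prod>l\<in>UNIV. y l) / y i" for i
    using assms[of i] by (simp add: prod.remove[of UNIV i])
  then show ?thesis by (simp add: sum_distrib_left right_diff_distrib mult_ac)
qed

lemma det_minus_outer_unitary_diag:
  assumes U: "unitary U" and nz: "\<And>i. c \<noteq> lam i"
  shows "det (mat (of_real c) - U ** diag_mat lam ** cadj U - outer w) =
    of_real ((\<Prod>i\<in>UNIV. c - lam i) * (1 - (\<Sum>i\<in>UNIV. (cmod ((cadj U *v w)$i))^2 / (c - lam i))))"
proof -
  have "outer w = U ** outer (cadj U *v w) ** cadj U"
    using outer_matrix_vector_mult[of U "cadj U *v w"] U by (simp add: unitary_mult_adjoint_vector)
  then have "mat (of_real c) - U ** diag_mat lam ** cadj U - outer w =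
      U ** (diag_mat (\<lambda>i. c - lam i) - outer (cadj U *v w)) ** cadj U"
    using U by (simp add: mat_minus_unitary_diag matrix_diff_ldistrib matrix_diff_rdistrib)
  then show ?thesis
    using nz by (simp add: det_unitary_conj[OF U] det_diag_mat_minus_outer prod_minus_sum_prod_remove)
qed

section \<open>Real estimates\<close>

lemma exp_le_inverse_one_minus: "s < 1 \<Longrightarrow> exp (s::real) \<le> 1 / (1 - s)"
  using exp_ge_add_one_self[of "-s"] by (simp add: exp_minus field_simps)

lemma exp_one_fifth_le: "exp (0.2::real) \<le> 1.2278"
proof -
  have "exp (0.2::real) = exp 0.05 ^ 4"
    using exp_of_nat_mult[of 4 "0.05::real"] by simp
  also have "\<dots> \<le> (20/19)^4"
    using exp_le_inverse_one_minus[of "0.05"] by (intro power_mono) auto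
  also have "\<dots> \<le> 1.2278" by (simp add: power_divide)
  finally show ?thesis .
qed

lemma exp_one_fifth_ge: "1.2189 \<le> exp (0.2::real)"
proof -
  have "(1.2189::real) \<le> 1.02^10" by (simp add: power_divide)
  also have "\<dots> \<le> exp 0.02 ^ 10"
    using exp_ge_add_one_self[of "0.02::real"] by (intro power_mono) auto
  also have "\<dots> = exp 0.2"
    using exp_of_nat_mult[of 10 "0.02::real"] by simp
  finally show ?thesis .
qed

lemma mult_exp_one_minus_ge_imp_near_one:
  fixes t :: real
  assumes "t > 0" and "0.9872 \<le> t * exp (1 - t)"
  shows "0.8 \<le> t \<and> t \<le> 1.2"
proof (rule ccontr)
  assume "\<not> (0.8 \<le> t \<and> t \<le> 1.2)"
  then consider "t < 0.8" | "t > 1.2" by linarith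
  then show False
  proof cases
    case 1
    have "t * exp (1 - t) = exp 0.2 * (t * exp (0.8 - t))"
      by (simp add: mult_ac flip: exp_add)
    also have "\<dots> \<le> exp 0.2 * (t * (1 / (0.2 + t)))"
      using exp_le_inverse_one_minus[of "0.8 - t"] \<open>t > 0\<close> by (intro mult_left_mono) auto
    also have "\<dots> \<le> 1.2278 * 0.8"
      using exp_one_fifth_le 1 \<open>t > 0\<close> by (intro mult_mono) (auto simp: field_simps)
    finally show False using assms(2) by simp
  next
    case 2
    have "t * exp (1 - t) = t * exp (1.2 - t) / exp 0.2"
      using exp_diff[of "1.2 - t" "0.2"] by simp
    also have "\<dots> \<le> t * (1 / (t - 0.2)) / exp 0.2"
      using exp_le_inverse_one_minus[of "1.2 - t"] 2 by (intro divide_right_mono mult_left_mono) auto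
    also have "\<dots> \<le> 1.2 / 1.2189"
      using exp_one_fifth_ge 2 by (intro frac_le) (auto simp: field_simps)
    finally show False using assms(2) by simp
  qed
qed

lemma prod_le_mult_exp_one_minus:
  fixes y :: "'n::finite \<Rightarrow> real"
  assumes pos: "\<And>i. 0 < y i" and sum: "(\<Sum>i\<in>UNIV. y i) = real CARD('n)"
  shows "(\<Prod>i\<in>UNIV. y i) \<le> y k * exp (1 - y k)"
proof -
  have "(\<Prod>i\<in>UNIV - {k}. y i) \<le> (\<Prod>i\<in>UNIV - {k}. exp (y i - 1))"
    using pos exp_ge_add_one_self[of "y _ - 1"] by (intro prod_mono) (auto simp: less_imp_le)
  also have "\<dots> = exp (\<Sum>i\<in>UNIV - {k}. y i - 1)" by (simp add: exp_sum)
  also have "(\<Sum>i\<in>UNIV - {k}. y i - 1) = 1 - y k"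
    using sum by (simp add: sum_diff1 sum_subtractf)
  finally show ?thesis
    using pos[of k] by (simp add: prod.remove[of UNIV k] mult_left_mono)
qed

lemma prod_ge_imp_near_one:
  fixes y :: "'n::finite \<Rightarrow> real"
  assumes "\<And>i. 0 < y i" and "(\<Sum>i\<in>UNIV. y i) = real CARD('n)"
    and "0.9872 \<le> (\<Prod>i\<in>UNIV. y i)"
  shows "0.8 \<le> y k \<and> y k \<le> 1.2"
  using mult_exp_one_minus_ge_imp_near_one prod_le_mult_exp_one_minus[OF assms(1,2), of k] assms
  by force

lemma one_plus_sum_le_prod:
  fixes t :: "'a \<Rightarrow> real"
  assumes "\<And>i. i \<in> A \<Longrightarrow> 0 \<le> t i"
  shows "1 + (\<Sum>i\<in>A. t i) \<le> (\<Prod>i\<in>A. 1 + t i)"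
  using assms
proof (induction A rule: infinite_finite_induct)
  case (insert a A)
  have "1 + (t a + (\<Sum>i\<in>A. t i)) \<le> (1 + t a) * (1 + (\<Sum>i\<in>A. t i))"
    using insert.prems by (simp add: algebra_simps sum_nonneg)
  also have "\<dots> \<le> (1 + t a) * (\<Prod>i\<in>A. 1 + t i)"
    using insert by (intro mult_left_mono) auto
  finally show ?case using insert.hyps by simp
qed simp_all

lemma prod_add_ge:
  fixes x :: "'a \<Rightarrow> real"
  assumes "finite A" "\<And>i. i \<in> A \<Longrightarrow> 0 < x i" "0 \<le> \<delta>"
  shows "(\<Prod>i\<in>A. x i) * (1 + \<delta> * (\<Sum>i\<in>A. 1 / x i)) \<le> (\<Prod>i\<in>A. x i + \<delta>)"
proof -
  have "x i + \<delta> = x i * (1 + \<delta> / x i)" if "i \<in> A" for i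
    using assms(2)[OF that] by (simp add: field_simps)
  then have "(\<Prod>i\<in>A. x i + \<delta>) = (\<Prod>i\<in>A. x i) * (\<Prod>i\<in>A. 1 + \<delta> / x i)"
    by (simp add: prod.distrib[symmetric] cong: prod.cong)
  moreover have "1 + \<delta> * (\<Sum>i\<in>A. 1 / x i) \<le> (\<Prod>i\<in>A. 1 + \<delta> / x i)"
    using one_plus_sum_le_prod[of A "\<lambda>i. \<delta> / x i"] assms(2,3)
    by (simp add: sum_distrib_left less_imp_le)
  ultimately show ?thesis
    using assms(2) by (simp add: mult_left_mono less_imp_le prod_pos)
qed

lemma sum_inverse_bounds:
  fixes x :: "'n::finite \<Rightarrow> real"
  assumes x: "\<And>i. 0.4 \<le> x i \<and> x i \<le> 0.6" and xsum: "(\<Sum>i\<in>UNIV. x i) = real CARD('n) / 2"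
  shows "2 * real CARD('n) \<le> (\<Sum>i\<in>UNIV. 1 / x i)" and "(\<Sum>i\<in>UNIV. 1 / x i) \<le> 2.5 * real CARD('n)"
proof -
  have xpos: "x i > 0" for i using x[of i] by linarith
  have "4 - 4 * x i \<le> 1 / x i" for i
  proof -
    have "(4 - 4 * x i) * x i \<le> 1"
      using zero_le_power2[of "2 * x i - 1"] by (simp add: algebra_simps power2_eq_square)
    then show ?thesis using xpos[of i] by (simp add: field_simps)
  qed
  then have "(\<Sum>i\<in>UNIV. 4 - 4 * x i) \<le> (\<Sum>i\<in>UNIV. 1 / x i)" by (intro sum_mono)
  then show "2 * real CARD('n) \<le> (\<Sum>i\<in>UNIV. 1 / x i)"
    by (simp add: sum_subtractf sum_distrib_left[symmetric] xsum)
  have "1 / x i \<le> 2.5" for i using x[of i] xpos[of i] by (simp add: field_simps)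
  then show "(\<Sum>i\<in>UNIV. 1 / x i) \<le> 2.5 * real CARD('n)"
    using sum_mono[of UNIV "\<lambda>i. 1 / x i" "\<lambda>_. 2.5"] by simp
qed

lemma barrier_sum_le:
  fixes x :: "'n::finite \<Rightarrow> real" and M J :: real
  defines "T \<equiv> (\<Sum>i\<in>UNIV. (1/2 - J/M + x i) / (x i + 1/M))"
  assumes xpos: "\<And>i. 0 < x i" and J: "0 \<le> J" "2 * J + 2 \<le> M"
  shows "0 \<le> T" and "T \<le> real CARD('n) + (1/2 - J/M) * (\<Sum>i\<in>UNIV. 1 / x i)"
proof -
  define S where "S = (\<Sum>i\<in>UNIV. 1 / (x i + 1/M))"
  define c where "c = 1/2 - J/M - 1/M"
  have M: "M > 0" using J by linarith
  have "(J + 1) / M \<le> 1/2" using J M by (simp add: field_simps)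
  then have c: "0 \<le> c" by (simp add: c_def add_divide_distrib)
  have y: "0 < x i + 1/M" for i using xpos[of i] M by (simp add: add_pos_pos)
  have "(1/2 - J/M + x i) / (x i + 1/M) = 1 + c * (1 / (x i + 1/M))" for i
  proof -
    have "(a + c) / a = 1 + c * (1 / a)" if "a > 0" for a :: real
      using that by (simp add: field_simps)
    moreover have "1/2 - J/M + x i = (x i + 1/M) + c" by (simp add: c_def)
    ultimately show ?thesis using y[of i] by metis
  qed
  then have T: "T = real CARD('n) + c * S" by (simp add: T_def S_def sum.distrib sum_distrib_left)
  have "0 \<le> S" unfolding S_def using y by (intro sum_nonneg) (simp add: less_imp_le)
  then show "0 \<le> T" using T c by simp
  have "S \<le> (\<Sum>i\<in>UNIV. 1 / x i)" unfolding S_def using xpos M by (intro sum_mono frac_le) auto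
  then have "c * S \<le> (1/2 - J/M) * (\<Sum>i\<in>UNIV. 1 / x i)"
    using c \<open>0 \<le> S\<close> M J by (intro mult_mono) (auto simp: c_def)
  then show "T \<le> real CARD('n) + (1/2 - J/M) * (\<Sum>i\<in>UNIV. 1 / x i)" using T by simp
qed

lemma barrier_ratio_bounds:
  fixes x :: "'n::finite \<Rightarrow> real" and M J :: real
  defines "d \<equiv> real CARD('n)"
  defines "T \<equiv> (\<Sum>i\<in>UNIV. (1/2 - J/M + x i) / (x i + 1/M))"
  assumes x: "\<And>i. 0.4 \<le> x i \<and> x i \<le> 0.6" and xsum: "(\<Sum>i\<in>UNIV. x i) = d / 2"
    and J: "0 \<le> J" "2 * J + 2 \<le> M"
  shows "0 \<le> T" and "T / (M - J) \<le> (\<Sum>i\<in>UNIV. 1 / x i) / M" and "T / (M - J) \<le> 2.25 * d / M"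
proof -
  define S' where "S' = (\<Sum>i\<in>UNIV. 1 / x i)"
  have M: "M > 0" "M - J > 0" using J by linarith+
  have xpos: "0 < x i" for i using x[of i] by linarith
  note T = barrier_sum_le[of x, OF xpos J, folded d_def T_def S'_def]
  then show "0 \<le> T" by simp
  obtain S'_ge: "2 * d \<le> S'" and S'_le: "S' \<le> 2.5 * d"
    using sum_inverse_bounds[OF x xsum[unfolded d_def]] by (simp add: S'_def d_def)
  have TM: "T * M \<le> d * M + (M/2 - J) * S'"
    using T(2) M by (simp add: field_simps mult_right_mono)
  also have "\<dots> \<le> (M - J) * S'"
  proof -
    have "(M/2) * (2 * d) \<le> (M/2) * S'" using S'_ge M by (intro mult_left_mono) auto
    then show ?thesis by (simp add: algebra_simps)
  qed
  finally show "T / (M - J) \<le> S' / M" using M by (simp add: field_simps)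
  have "(M/2 - J) * S' \<le> (M/2 - J) * (2.5 * d)"
    using S'_le J by (intro mult_left_mono) auto
  with TM have "T * M \<le> d * M + (M/2 - J) * (2.5 * d)" by linarith
  also have "\<dots> \<le> 2.25 * d * (M - J)"
  proof -
    have "0 \<le> J * d" using J by (simp add: d_def)
    moreover have "d * M + (M/2 - J) * (2.5 * d) = 2.25 * d * (M - J) - 0.25 * (J * d)"
      by (simp add: field_simps)
    ultimately show ?thesis by simp
  qed
  finally show "T / (M - J) \<le> 2.25 * d / M" using M by (simp add: field_simps)
qed

(* In the application x_i are the gaps u_j - lambda_i, M = m and J = j, and the right-hand
   side is the average of det(u_(j+1) I - A_j - v v^H) over the unused vectors v. *)

lemma barrier_potential_drop:
  fixes x :: "'n::finite \<Rightarrow> real" and M J :: real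
  defines "d \<equiv> real CARD('n)"
  defines "T \<equiv> (\<Sum>i\<in>UNIV. (1/2 - J/M + x i) / (x i + 1/M))"
  assumes x: "\<And>i. 0.4 \<le> x i \<and> x i \<le> 0.6" and xsum: "(\<Sum>i\<in>UNIV. x i) = d / 2"
    and J: "0 \<le> J" "2 * J + 2 \<le> M" and M: "2.25 * d \<le> M"
  shows "(\<Prod>i\<in>UNIV. x i) * (1 - 5.625 * d^2 / M^2) \<le> (\<Prod>i\<in>UNIV. x i + 1/M) * (1 - T / (M - J))"
proof -
  define S' where "S' = (\<Sum>i\<in>UNIV. 1 / x i)"
  define Q where "Q = T / (M - J)"
  have xpos: "x i > 0" for i using x[of i] by linarith
  have "M > 0" "M - J > 0" using J by linarith+
  note ratio = barrier_ratio_bounds[OF x xsum[unfolded d_def] J, folded d_def T_def S'_def Q_def]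
  have S'_le: "S' \<le> 2.5 * d"
    using sum_inverse_bounds[OF x xsum[unfolded d_def]] by (simp add: S'_def d_def)
  have "0 \<le> Q" using ratio(1) \<open>M - J > 0\<close> by (simp add: Q_def)
  have "2.25 * d / M \<le> 1" using M \<open>M > 0\<close> by simp
  then have "Q \<le> 1" using ratio(3) by linarith
  have "(S' / M) * Q \<le> (2.5 * d / M) * (2.25 * d / M)"
    using S'_le ratio(3) \<open>0 \<le> Q\<close> \<open>M > 0\<close> by (intro mult_mono divide_right_mono) (auto simp: d_def)
  then have "1 - 5.625 * d^2 / M^2 \<le> 1 - (S' / M) * Q"
    by (simp add: power2_eq_square)
  also have "\<dots> \<le> (1 + S' / M) * (1 - Q)"
  proof -
    have "(1 + a) * (1 - Q) = 1 - a * Q + (a - Q)" for a :: real by (simp add: algebra_simps)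
    from this[of "S' / M"] show ?thesis using ratio(2) by linarith
  qed
  finally have "(\<Prod>i\<in>UNIV. x i) * (1 - 5.625 * d^2 / M^2) \<le> (\<Prod>i\<in>UNIV. x i) * (1 + S' / M) * (1 - Q)"
    using xpos by (simp add: prod_pos mult_left_mono less_imp_le mult.assoc)
  also have "\<dots> \<le> (\<Prod>i\<in>UNIV. x i + 1/M) * (1 - Q)"
    using prod_add_ge[of UNIV x "1/M"] xpos \<open>M > 0\<close> \<open>Q \<le> 1\<close>
    by (intro mult_right_mono) (auto simp: S'_def)
  finally show ?thesis by (simp add: Q_def)
qed

section \<open>Algorithm 1\<close>

locale isotropic_run =
  fixes v :: "nat \<Rightarrow> complex^'n::finite" and m :: nat and \<alpha> :: real and s :: "nat \<Rightarrow> nat"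
  assumes even_m: "even m"
    and isotropic: "(\<Sum>i<m. outer (v i)) = mat 1"
    and norm_v: "\<forall>i<m. (norm (v i))^2 = \<alpha>"
    and alpha_le: "\<alpha> \<le> 1 / (221 * real CARD('n))"
    and run: "is_run v m \<alpha> s"
begin

abbreviation "A \<equiv> alg_A v s"

definition u :: "nat \<Rightarrow> real" where
  "u j = 1/2 + real j / real m"

lemma alpha_mult_m: "\<alpha> * real m = real CARD('n)"
proof -
  have "(of_nat CARD('n) :: complex) = (\<Sum>i\<in>UNIV. (\<Sum>k<m. outer (v k))$i$i)"
    by (simp add: isotropic mat_def)
  also have "\<dots> = (\<Sum>k<m. cinner (v k) (v k))"
    by (simp add: sum_component outer_def cinner_def mult.commute sum.swap[of _ "{..<m}"])
  also have "\<dots> = of_real (\<alpha> * real m)" using norm_v by (simp add: cinner_self)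
  finally show ?thesis by (metis of_real_eq_iff of_real_of_nat_eq)
qed

lemma m_pos: "0 < m"
  using alpha_mult_m by (cases m) auto

lemma alpha_eq: "\<alpha> = real CARD('n) / real m"
  using alpha_mult_m m_pos by (simp add: field_simps)

lemma m_large: "221 * (real CARD('n))^2 \<le> real m"
  using alpha_le m_pos by (simp add: alpha_eq field_simps power2_eq_square)

lemma m_ge_card: "2.25 * real CARD('n) \<le> real m"
proof -
  have "1 \<le> real CARD('n)" by (simp add: Suc_leI)
  then show ?thesis
    using m_large mult_left_mono[of 1 "real CARD('n)" "real CARD('n)"]
    unfolding power2_eq_square by linarith
qed

lemma alg_u_eq: "alg_u CARD('n) \<alpha> j = u j"
  by (simp add: alg_u_def u_def alpha_eq)

lemma u_Suc: "u (Suc j) = u j + 1 / real m"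
  by (simp add: u_def add_divide_distrib)

lemma A_Suc: "A (Suc j) = A j + outer (v (s j))"
  by (simp add: alg_A_def)

lemma run_step:
  assumes "j < m div 2"
  shows "s j < m" and "s j \<notin> s ` {..<j}"
    and "\<And>k. k < m \<Longrightarrow> k \<notin> s ` {..<j} \<Longrightarrow>
           Re (det (mat (of_real (u (Suc j))) - A j - outer (v k)))
           \<le> Re (det (mat (of_real (u (Suc j))) - A j - outer (v (s j))))"
  using run assms unfolding is_run_def alg_u_eq by auto

lemma inj_on_s: "J \<le> m div 2 \<Longrightarrow> inj_on s {..<J}"
  by (rule linorder_inj_onI') (metis run_step(2) lessThan_iff image_eqI order_less_le_trans)

lemma chosen_subset: "J \<le> m div 2 \<Longrightarrow> s ` {..<J} \<subseteq> {..<m}"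
  using run_step(1) by auto

lemma card_chosen: "J \<le> m div 2 \<Longrightarrow> card (s ` {..<J}) = J"
  by (simp add: card_image inj_on_s)

lemma A_eq_sum_chosen: "J \<le> m div 2 \<Longrightarrow> A J = (\<Sum>k\<in>s ` {..<J}. outer (v k))"
  by (simp add: alg_A_def sum.reindex inj_on_s)

lemma hermitian_A: "hermitian (A j)"
  by (simp add: hermitian_def alg_A_def cadj_sum hermitian_outer[unfolded hermitian_def])

lemma isotropic_weights:
  assumes "unitary U"
  shows "(\<Sum>k<m. (cmod ((cadj U *v v k)$i))^2) = 1"
  using diag_entry_eq_sum_weights[OF assms, of "{..<m}" "\<lambda>_. 1" v] unitary_diag_mat_const[OF assms, of 1]
  by (simp add: isotropic)

lemma eigenvalue_weights:
  assumes "J \<le> m div 2" "unitary U" "A J = U ** diag_mat lam ** cadj U"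
  shows "lam i = (\<Sum>k\<in>s ` {..<J}. (cmod ((cadj U *v v k)$i))^2)"
  using assms by (intro diag_entry_eq_sum_weights) (simp_all add: A_eq_sum_chosen)

lemma sum_barrier_gaps:
  assumes "J \<le> m div 2" "unitary U" "A J = U ** diag_mat lam ** cadj U"
  shows "(\<Sum>i\<in>UNIV. u J - lam i) = real CARD('n) / 2"
proof -
  have "(\<Sum>i\<in>UNIV. lam i) = (\<Sum>k\<in>s ` {..<J}. \<Sum>i\<in>UNIV. (cmod ((cadj U *v v k)$i))^2)"
    by (simp add: eigenvalue_weights[OF assms] sum.swap[of _ "s ` {..<J}"])
  also have "\<dots> = (\<Sum>k\<in>s ` {..<J}. \<alpha>)"
    using chosen_subset[OF assms(1)] norm_v
    by (intro sum.cong) (auto simp: norm_adjoint_unitary_components[OF assms(2)])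
  also have "\<dots> = real J * \<alpha>" by (simp add: card_chosen[OF assms(1)])
  finally show ?thesis by (simp add: sum_subtractf u_def alpha_eq ring_distribs)
qed

(* The loss 5.625 = 2.5 * 2.25 per step comes from barrier_potential_drop with d/m = alpha;
   the factor 2^d normalises det(u_0 I - A_0) = 2^-d. *)

definition barrier_ok :: "nat \<Rightarrow> bool" where
  "barrier_ok j \<longleftrightarrow> lambda_max (A j) < u j \<and>
     1 - 5.625 * \<alpha>^2 * real j \<le> 2 ^ CARD('n) * Re (det (mat (of_real (u j)) - A j))"

lemma barrier_loss_le: "j \<le> m div 2 \<Longrightarrow> 5.625 * \<alpha>^2 * real j \<le> 0.0128"
proof -
  assume "j \<le> m div 2"
  then have "\<alpha>^2 * real j \<le> \<alpha>^2 * (real m / 2)"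
    using zero_le_power2[of \<alpha>] by (intro mult_left_mono) linarith+
  also have "\<dots> = \<alpha> * real CARD('n) / 2" using alpha_mult_m by (simp add: power2_eq_square)
  also have "\<dots> \<le> 1 / 442" using alpha_le by (simp add: field_simps)
  finally show ?thesis by simp
qed

lemma barrier_gaps_of_ok:
  assumes ok: "barrier_ok j" and j: "j \<le> m div 2"
    and U: "unitary U" and Aj: "A j = U ** diag_mat lam ** cadj U"
  shows "0.4 \<le> u j - lam i \<and> u j - lam i \<le> 0.6"
proof -
  define y where "y i = 2 * (u j - lam i)" for i
  have "lam i \<le> Max (range lam)" for i by simp
  then have "0 < y i" for i
    using ok by (simp add: y_def barrier_ok_def Aj lambda_max_unitary_diag[OF U])
  moreover have "(\<Sum>i\<in>UNIV. y i) = 2 * (\<Sum>i\<in>UNIV. u j - lam i)"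
    by (simp add: y_def sum_distrib_left)
  then have "(\<Sum>i\<in>UNIV. y i) = real CARD('n)"
    using sum_barrier_gaps[OF j U Aj] by simp
  moreover have "Re (det (mat (of_real (u j)) - A j)) = (\<Prod>i\<in>UNIV. u j - lam i)"
    unfolding Aj det_mat_minus_unitary_diag[OF U] by (simp only: Re_complex_of_real)
  then have "(\<Prod>i\<in>UNIV. y i) = 2 ^ CARD('n) * Re (det (mat (of_real (u j)) - A j))"
    unfolding y_def prod.distrib by simp
  then have "0.9872 \<le> (\<Prod>i\<in>UNIV. y i)"
    using ok barrier_loss_le[OF j] by (simp add: barrier_ok_def)
  ultimately show ?thesis using prod_ge_imp_near_one[of y i] by (simp add: y_def)
qed

lemma barrier_ok_0: "barrier_ok 0"
proof -
  have "diag_mat (\<lambda>_. 0) = (0 :: complex^'n^'n)" by (simp add: diag_mat_def vec_eq_iff)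
  then have A0: "A 0 = mat 1 ** diag_mat (\<lambda>_. 0) ** cadj (mat 1)" by (simp add: alg_A_def)
  have I: "unitary (mat 1 :: complex^'n^'n)" by (simp add: unitary_def)
  have "lambda_max (A 0) = 0"
    unfolding A0 lambda_max_unitary_diag[OF I] by simp
  moreover have "Re (det (mat (of_real (u 0)) - A 0)) = (1/2) ^ CARD('n)"
    unfolding A0 det_mat_minus_unitary_diag[OF I] by (simp only: Re_complex_of_real) (simp add: u_def)
  ultimately show ?thesis
    by (simp add: barrier_ok_def u_def power_mult_distrib[symmetric])
qed

(* The greedy choice is at least the average over the m - j unused vectors, and by isotropy
   their squared coordinates in the eigenbasis of A_j sum to 1 - lambda_i. *)

lemma greedy_det_ge_average:
  assumes j: "j < m div 2" and U: "unitary U" and Aj: "A j = U ** diag_mat lam ** cadj U"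
    and gap: "\<And>i. lam i < u j"
  shows "(\<Prod>i\<in>UNIV. u (Suc j) - lam i) *
           (1 - (\<Sum>i\<in>UNIV. (1 - lam i) / (u (Suc j) - lam i)) / real (m - j))
         \<le> Re (det (mat (of_real (u (Suc j))) - A (Suc j)))"
proof -
  define P where "P = (\<Prod>i\<in>UNIV. u (Suc j) - lam i)"
  define W where "W k i = (cmod ((cadj U *v v k)$i))^2" for k i
  define G where "G k = Re (det (mat (of_real (u (Suc j))) - A j - outer (v k)))" for k
  define R where "R = {..<m} - s ` {..<j}"
  have "0 < 1 / real m" using m_pos by simp
  then have y: "0 < u (Suc j) - lam i" for i using gap[of i] unfolding u_Suc by linarith
  have G: "G k = P * (1 - (\<Sum>i\<in>UNIV. W k i / (u (Suc j) - lam i)))" for k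
  proof -
    have "u (Suc j) \<noteq> lam i" for i using y[of i] by simp
    from det_minus_outer_unitary_diag[OF U this] show ?thesis
      by (simp only: G_def P_def W_def Aj Re_complex_of_real)
  qed
  have R: "finite R" "card R = m - j" "s j \<in> R"
    using chosen_subset[of j] card_chosen[of j] run_step(1,2)[OF j] j
    by (auto simp: R_def card_Diff_subset)
  have WR: "(\<Sum>k\<in>R. W k i) = 1 - lam i" for i
    using isotropic_weights[OF U, of i] eigenvalue_weights[OF _ U Aj, of i] chosen_subset[of j] j
    by (simp add: R_def W_def sum_diff)
  define T where "T = (\<Sum>i\<in>UNIV. (1 - lam i) / (u (Suc j) - lam i))"
  have "(\<Sum>k\<in>R. \<Sum>i\<in>UNIV. W k i / (u (Suc j) - lam i)) = T"
    by (subst sum.swap) (simp add: T_def sum_divide_distrib[symmetric] WR)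
  then have "(\<Sum>k\<in>R. G k) = P * (real (card R) - T)"
    by (simp add: G sum_subtractf sum_distrib_left[symmetric] right_diff_distrib)
  moreover have "(\<Sum>k\<in>R. G k) \<le> real (card R) * G (s j)"
    using sum_bounded_above[of R G "G (s j)"] run_step(3)[OF j] by (simp add: G_def R_def)
  moreover have "0 < real (card R)" using R j by simp
  ultimately have "P * (1 - T / real (card R)) \<le> G (s j)" by (simp add: field_simps)
  then show ?thesis using R by (simp add: P_def G_def T_def A_Suc diff_diff_eq)
qed

lemma det_barrier_step:
  assumes ok: "barrier_ok j" and j: "j < m div 2"
  shows "Re (det (mat (of_real (u j)) - A j)) * (1 - 5.625 * \<alpha>^2)
           \<le> Re (det (mat (of_real (u (Suc j))) - A (Suc j)))"
proof -
  obtain U lam where U: "unitary U" and Aj: "A j = U ** diag_mat lam ** cadj U"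
    using hermitian_unitary_diagonalization[OF hermitian_A] .
  define x where "x i = u j - lam i" for i
  have x: "0.4 \<le> x i \<and> x i \<le> 0.6" for i
    using barrier_gaps_of_ok[OF ok _ U Aj] j by (simp add: x_def)
  have xsum: "(\<Sum>i\<in>UNIV. x i) = real CARD('n) / 2"
    using sum_barrier_gaps[OF _ U Aj] j by (simp add: x_def)
  have jm: "0 \<le> real j" "2 * real j + 2 \<le> real m" using j even_m by (auto elim!: evenE)
  have det_j: "Re (det (mat (of_real (u j)) - A j)) = (\<Prod>i\<in>UNIV. x i)"
    unfolding Aj det_mat_minus_unitary_diag[OF U] x_def by (simp only: Re_complex_of_real)
  have "(\<Prod>i\<in>UNIV. x i) * (1 - 5.625 * \<alpha>^2) \<le>
      (\<Prod>i\<in>UNIV. x i + 1 / real m) *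
        (1 - (\<Sum>i\<in>UNIV. (1/2 - real j / real m + x i) / (x i + 1 / real m)) / (real m - real j))"
    using barrier_potential_drop[OF x xsum jm m_ge_card] by (simp add: alpha_eq power_divide)
  also have "\<dots> \<le> Re (det (mat (of_real (u (Suc j))) - A (Suc j)))"
  proof -
    have gap: "lam i < u j" for i using x[of i] by (simp add: x_def)
    have "u (Suc j) - lam i = x i + 1 / real m" for i by (simp add: x_def u_Suc)
    moreover have "1 - lam i = 1/2 - real j / real m + x i" for i by (simp add: x_def u_def)
    moreover have "real (m - j) = real m - real j" using j by simp
    ultimately show ?thesis using greedy_det_ge_average[OF j U Aj gap] by simp
  qed
  finally show ?thesis unfolding det_j .
qed

lemma det_barrier_Suc:
  assumes ok: "barrier_ok j" and j: "j < m div 2"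
  shows "1 - 5.625 * \<alpha>^2 * real (Suc j) \<le> 2 ^ CARD('n) * Re (det (mat (of_real (u (Suc j))) - A (Suc j)))"
proof -
  define \<epsilon> where "\<epsilon> = 5.625 * \<alpha>^2"
  have "\<epsilon> \<le> 1" using barrier_loss_le[of 1] j by (simp add: \<epsilon>_def)
  have "1 - \<epsilon> * real (Suc j) \<le> (1 - \<epsilon> * real j) * (1 - \<epsilon>)"
    by (simp add: algebra_simps \<epsilon>_def)
  also have "\<dots> \<le> 2 ^ CARD('n) * Re (det (mat (of_real (u j)) - A j)) * (1 - \<epsilon>)"
    using ok \<open>\<epsilon> \<le> 1\<close> by (intro mult_right_mono) (auto simp: barrier_ok_def \<epsilon>_def mult_ac)
  also have "\<dots> \<le> 2 ^ CARD('n) * Re (det (mat (of_real (u (Suc j))) - A (Suc j)))"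
    using det_barrier_step[OF ok j] by (simp add: \<epsilon>_def mult.assoc)
  finally show ?thesis by (simp add: \<epsilon>_def mult_ac)
qed

lemma lambda_max_le_of_ok:
  assumes "barrier_ok j" "j \<le> m div 2"
  shows "lambda_max (A j) \<le> u j - 0.4"
proof -
  obtain U lam where U: "unitary U" and Aj: "A j = U ** diag_mat lam ** cadj U"
    using hermitian_unitary_diagonalization[OF hermitian_A] .
  have "lam i \<le> u j - 0.4" for i using barrier_gaps_of_ok[OF assms U Aj, of i] by simp
  then show ?thesis by (simp add: Aj lambda_max_unitary_diag[OF U])
qed

lemma barrier_ok_Suc:
  assumes ok: "barrier_ok j" and j: "j < m div 2"
  shows "barrier_ok (Suc j)"
proof -
  have "lambda_max (A j) \<le> u j - 0.4" using lambda_max_le_of_ok[OF ok] j by simp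
  moreover have "lambda_max (A (Suc j)) \<le> lambda_max (A j) + \<alpha>"
    using lambda_max_add_outer_le[OF hermitian_A, of j "v (s j)"] norm_v run_step(1)[OF j]
    by (simp add: A_Suc)
  moreover have "\<alpha> \<le> 1 / 221"
  proof -
    have "1 / (221 * real CARD('n)) \<le> 1 / 221" by (intro frac_le) (auto simp: Suc_leI)
    then show ?thesis using alpha_le by linarith
  qed
  moreover have "u j < u (Suc j)" using m_pos by (simp add: u_Suc)
  ultimately have "lambda_max (A (Suc j)) < u (Suc j)" by linarith
  with det_barrier_Suc[OF ok j] show ?thesis by (simp add: barrier_ok_def)
qed

lemma barrier_ok: "j \<le> m div 2 \<Longrightarrow> barrier_ok j"
  by (induction j) (auto simp: barrier_ok_0 barrier_ok_Suc)

lemma barrier_gaps: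
  assumes "j \<le> m div 2" "unitary U" "A j = U ** diag_mat lam ** cadj U"
  shows "0.4 \<le> u j - lam i \<and> u j - lam i \<le> 0.6"
  by (rule barrier_gaps_of_ok[OF barrier_ok[OF assms(1)] assms])

end

theorem lemma3p1:
  fixes v :: "nat \<Rightarrow> complex^'n::finite" and m :: nat and \<alpha> :: real and s :: "nat \<Rightarrow> nat"
  assumes "even m"
    and "(\<Sum>i<m. outer (v i)) = mat 1"
    and "\<forall>i<m. (norm (v i))^2 = \<alpha>"
    and "\<alpha> \<le> 1 / (221 * real CARD('n))"
    and "is_run v m \<alpha> s"
  shows "\<forall>j \<le> m div 2.
           alg_u CARD('n) \<alpha> j - lambda_max (alg_A v s j) \<ge> 1/3 \<and>
           cond_num (mat (complex_of_real (alg_u CARD('n) \<alpha> j)) - alg_A v s j) \<le> 3/2"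
proof (intro allI impI)
  interpret isotropic_run v m \<alpha> s
    using assms by unfold_locales
  fix j assume j: "j \<le> m div 2"
  obtain U lam where U: "unitary U" and Aj: "alg_A v s j = U ** diag_mat lam ** cadj U"
    using hermitian_unitary_diagonalization[OF hermitian_A] .
  note gaps = barrier_gaps[OF j U Aj]
  have "lambda_max (alg_A v s j) \<le> u j - 0.4" by (rule lambda_max_le_of_ok[OF barrier_ok[OF j] j])
  moreover have "cond_num (mat (of_real (u j)) - alg_A v s j) \<le> 0.6 / 0.4"
    unfolding Aj mat_minus_unitary_diag[OF U] using gaps by (intro cond_num_unitary_diag_le[OF U]) auto
  ultimately show "alg_u CARD('n) \<alpha> j - lambda_max (alg_A v s j) \<ge> 1/3 \<and>
      cond_num (mat (complex_of_real (alg_u CARD('n) \<alpha> j)) - alg_A v s j) \<le> 3/2"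
    by (simp add: alg_u_eq)
qed

end
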